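(* Let $k\ge1$ and $\gamma_1,\dots,\gamma_k\in\mathbb{R}$, and define $f:\mathbb{R}\to\mathbb{R}$ by $f(\omega)=\frac1k\sum_{j=1}^k\cos(\omega\gamma_j)$. Then for every $\alpha>0$, $\sup_{\omega\in[\alpha,100\alpha]}f(\omega)\ge-\frac15$. *)

theory Defs
  imports "HOL-Analysis.Analysis"
begin

end

theory Submission
  imports Defs
begin

text \<open>Nonnegativity of the Fejer kernel,
  \<open>0 \<le> |\<Sum>j\<le>n. exp (i j x)|\<^sup>2 = n + 1 + 2 (\<Sum>m=1..n. (n + 1 - m) cos (m x))\<close>,
  applied to each \<open>x = \<alpha> \<gamma>\<^sub>j\<close> and averaged over \<open>j\<close>, gives
  \<open>\<Sum>m=1..n. (n + 1 - m) f (m \<alpha>) \<ge> -(n + 1)/2\<close>. The weights \<open>n + 1 - m\<close> sum to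
  \<open>n (n + 1)/2\<close>, so \<open>f (m \<alpha>) \<ge> -1/n\<close> for some \<open>1 \<le> m \<le> n\<close>; take \<open>n = 5\<close>.\<close>

lemma sum_sum_cos_diff_eq:
  fixes x :: real
  shows "(\<Sum>j\<le>n. \<Sum>l\<le>n. cos ((real j - real l) * x))
       = real n + 1 + 2 * (\<Sum>m=1..n. (real n + 1 - real m) * cos (real m * x))"
proof (induction n)
  case 0
  show ?case by simp
next
  case (Suc n)
  have row: "(\<Sum>l\<le>n. cos ((real (Suc n) - real l) * x)) = (\<Sum>m=1..Suc n. cos (real m * x))"
  proof -
    have "(\<Sum>l\<le>n. cos ((real (Suc n) - real l) * x))
        = (\<Sum>l=0..<Suc n. cos ((real (Suc n) - real l) * x))"
      by (simp add: atLeast0LessThan lessThan_Suc_atMost)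
    also have "\<dots> = (\<Sum>m=1..Suc n. cos ((real (Suc n) - real (Suc n - m)) * x))"
      using sum.atLeastLessThan_rev_at_least_Suc_atMost
        [of "\<lambda>l. cos ((real (Suc n) - real l) * x)" 0 "Suc n"] by simp
    also have "\<dots> = (\<Sum>m=1..Suc n. cos (real m * x))"
      by (rule sum.cong) (auto simp: of_nat_diff)
    finally show ?thesis .
  qed
  have col: "(\<Sum>j\<le>n. cos ((real j - real (Suc n)) * x)) = (\<Sum>m=1..Suc n. cos (real m * x))"
    unfolding row [symmetric] by (intro sum.cong refl) (metis cos_minus minus_diff_eq mult_minus_left)
  have coeff: "(\<Sum>m=1..Suc n. (real (Suc n) + 1 - real m) * cos (real m * x))
      = (\<Sum>m=1..n. (real n + 1 - real m) * cos (real m * x)) + (\<Sum>m=1..Suc n. cos (real m * x))"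
    by (simp add: sum.distrib [symmetric] algebra_simps)
  have "(\<Sum>j\<le>Suc n. \<Sum>l\<le>Suc n. cos ((real j - real l) * x))
      = (\<Sum>j\<le>n. \<Sum>l\<le>n. cos ((real j - real l) * x))
        + (\<Sum>j\<le>n. cos ((real j - real (Suc n)) * x))
        + (\<Sum>l\<le>n. cos ((real (Suc n) - real l) * x)) + 1"
    by (simp add: sum.distrib del: of_nat_Suc)
  then show ?case
    unfolding Suc.IH row col coeff by (simp add: algebra_simps)
qed

lemma fejer_sum_ge:
  fixes x :: real
  shows "(\<Sum>m=1..n. (real n + 1 - real m) * cos (real m * x)) \<ge> - (real n + 1) / 2"
proof -
  have "(\<Sum>j\<le>n. \<Sum>l\<le>n. cos ((real j - real l) * x))
      = (\<Sum>j\<le>n. cos (real j * x))\<^sup>2 + (\<Sum>j\<le>n. sin (real j * x))\<^sup>2"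
    by (simp add: power2_eq_square sum_product left_diff_distrib cos_diff sum.distrib)
  also have "\<dots> \<ge> 0" by simp
  finally show ?thesis unfolding sum_sum_cos_diff_eq by simp
qed

lemma exists_multiple_sum_cos_ge:
  fixes t :: "'a \<Rightarrow> real"
  assumes "finite J" and "n \<ge> 1"
  shows "\<exists>m\<in>{1..n}. (\<Sum>j\<in>J. cos (real m * t j)) \<ge> - real (card J) / real n"
proof (rule ccontr)
  assume "\<not> ?thesis"
  then have small: "(\<Sum>j\<in>J. cos (real m * t j)) < - real (card J) / real n" if "m \<in> {1..n}" for m
    using that by (auto simp: not_le)
  have "- (real n + 1) / 2 * real (card J) = (\<Sum>j\<in>J. - (real n + 1) / 2)"
    by simp
  also have "\<dots> \<le> (\<Sum>j\<in>J. \<Sum>m=1..n. (real n + 1 - real m) * cos (real m * t j))"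
    by (intro sum_mono fejer_sum_ge)
  also have "\<dots> = (\<Sum>m=1..n. (real n + 1 - real m) * (\<Sum>j\<in>J. cos (real m * t j)))"
    by (simp add: sum_distrib_left sum.swap [of _ J])
  also have "\<dots> < (\<Sum>m=1..n. (real n + 1 - real m) * (- real (card J) / real n))"
    using assms(2) small by (intro sum_strict_mono mult_strict_left_mono) auto
  also have "\<dots> = - (real n + 1) / 2 * real (card J)"
  proof -
    have "(\<Sum>m=1..n. real n + 1 - real m) = real n * (real n + 1) / 2"
      using double_gauss_sum_from_Suc_0 [of n, where 'a = real] by (simp add: sum_subtractf)
    then show ?thesis
      using assms(2) by (simp only: sum_distrib_right [symmetric]) (simp add: field_simps)
  qed
  finally show False by simp
qed

theorem mainTheorem3:
  fixes k :: nat and \<gamma> :: "nat \<Rightarrow> real" and f :: "real \<Rightarrow> real" and \<alpha> :: real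
  assumes "k \<ge> 1"
    and "\<And>\<omega>. f \<omega> = (1 / real k) * (\<Sum>j=1..k. cos (\<omega> * \<gamma> j))"
    and "\<alpha> > 0"
  shows "(SUP \<omega>\<in>{\<alpha>..100 * \<alpha>}. f \<omega>) \<ge> - 1 / 5"
proof -
  obtain m :: nat where m: "m \<in> {1..5}"
    and "(\<Sum>j=1..k. cos (real m * (\<alpha> * \<gamma> j))) \<ge> - real k / 5"
    using exists_multiple_sum_cos_ge [of "{1..k}" 5 "\<lambda>j. \<alpha> * \<gamma> j"] by auto
  then have "f (real m * \<alpha>) \<ge> - 1 / 5"
    using assms(1) by (simp add: assms(2) mult.assoc field_simps)
  moreover have "real m * \<alpha> \<in> {\<alpha>..100 * \<alpha>}"
    using m assms(3) by auto
  moreover have "bdd_above (f ` {\<alpha>..100 * \<alpha>})"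
  proof (rule bdd_aboveI)
    fix y assume "y \<in> f ` {\<alpha>..100 * \<alpha>}"
    then obtain \<omega> where "y = f \<omega>" by blast
    have "(\<Sum>j=1..k. cos (\<omega> * \<gamma> j)) \<le> real k"
      using sum_mono [of "{1..k}" "\<lambda>j. cos (\<omega> * \<gamma> j)" "\<lambda>_. 1"] by simp
    then show "y \<le> 1"
      using assms(1) \<open>y = f \<omega>\<close> by (simp add: assms(2))
  qed
  ultimately show ?thesis
    by (meson cSUP_upper order_trans)
qed

end
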